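(* Let $(A,E)$ be a $B$-valued Banach noncommutative probability space, $a\in A$ with $E(a)$ invertible, $N\in\mathbb N$, and fix $i\in I$ in the Fock space setting below. Let $\alpha_0=E(a)$. Then there exist $\alpha_n\in\mathcal B_n(B)$, $n=1,\ldots,N$, such that with \[ X=\sum_{n=0}^N\big(V_{i,n}(\alpha_n)+W_{i,n}(\alpha_n)\big)\in\mathcal B(\mathcal F) \] one has $\mathcal E(b_0Xb_1X\cdots b_kX)=E(b_0ab_1a\cdots b_ka)$ for all $k\in\{1,\ldots,N\}$ and all $b_0,\ldots,b_k\in B$ (with $b_j$ acting on $\mathcal F$ as $\lambda(b_j)$).
   Context: A $B$-valued Banach noncommutative probability space is a pair $(A,E)$ where $A$ is a unital Banach algebra containing an isometric copy of the unital complex Banach algebra $B$ as a unital subalgebra and $E:A\to B$ is a bounded projection with $E(b_1ab_2)=b_1E(a)b_2$. Fock space setting: $I$ a set, $\mathbb N=\{1,2,\ldots\}$; $D=\ell^1(I,B)$ (functions $d:I\to B$ with $\sum_i\|d(i)\|<\infty$, left action $(bd)(i)=b\,d(i)$, $\delta_i$ the function $1$ at $i$, $0$ elsewhere); $\mathcal F=B\Omega\oplus\bigoplus_{k\ge1}D^{\hat\otimes k}\hat\otimes B$ ($\ell^1$-sum of projective tensor products, $\Omega$ the unit of the copy $B\Omega$ of $B$); $\lambda(b)$: $b_0\Omega\mapsto(bb_0)\Omega$, $d_1\otimes\cdots\otimes d_k\otimes b_0\mapsto(bd_1)\otimes\cdots\otimes d_k\otimes b_0$; $P$ the projection onto $B\Omega$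 killing other summands, $\mathcal E(X)=P(X\Omega)$; $L_i$: $b_0\Omega\mapsto\delta_i\otimes b_0$, $d_1\otimes\cdots\otimes b_0\mapsto\delta_i\otimes d_1\otimes\cdots\otimes b_0$. $\mathcal B_n(B)$ = bounded multilinear maps $B^n\to B$, $\mathcal B_0(B)=B$. For $n\ge1$, $V_{i,n}(\alpha_n)$, $W_{i,n}(\alpha_n)$ vanish on $B\Omega$ and on $d_1\otimes\cdots\otimes d_k\otimes b_0$ with $k<n$; for $k=n$ they give $\alpha_n(d_1(i),\ldots,d_n(i))b_0\Omega$ resp. $\alpha_n(d_1(i),\ldots,d_n(i))\delta_i\otimes b_0$; for $k>n$ they give $\alpha_n(d_1(i),\ldots,d_n(i))d_{n+1}\otimes\cdots\otimes d_k\otimes b_0$ resp. $\alpha_n(d_1(i),\ldots,d_n(i))\delta_i\otimes d_{n+1}\otimes\cdots\otimes d_k\otimes b_0$. $V_{i,0}(\alpha_0)=\lambda(\alpha_0)$, $W_{i,0}(\alpha_0)=\lambda(\alpha_0)L_i$. *)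

theory Defs
  imports "HOL-Analysis.Analysis"
begin

text \<open>Isabelle/HOL has no class of complex vector spaces.  A complex unital Banach
algebra is modelled as a real unital Banach algebra together with the element
j = i*1, which is central, squares to -1 and for which multiplication by
unimodular complex scalars cos t + j sin t is isometric.  Complex scalar
multiplication is then (x + iy) b = x b + y (j b).\<close>

definition complex_structure :: "'b::{real_normed_algebra_1,banach} \<Rightarrow> bool" where
  "complex_structure j \<longleftrightarrow> j * j = - 1 \<and> (\<forall>x. j * x = x * j) \<and>
     (\<forall>t x. norm (cos t *\<^sub>R x + sin t *\<^sub>R (j * x)) = norm x)"

text \<open>B-valued Banach noncommutative probability space (A,E): iota is the isometric
unital embedding of B into A, E a bounded B-bimodule projection onto B.\<close>

definition banach_ncps ::
  "'b::{real_normed_algebra_1,banach} \<Rightarrow> ('b \<Rightarrow> 'a::{real_normed_algebra_1,banach}) \<Rightarrow> ('a \<Rightarrow> 'b) \<Rightarrow> bool" where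
  "banach_ncps j \<iota> E \<longleftrightarrow>
     complex_structure j \<and> complex_structure (\<iota> j) \<and>
     bounded_linear \<iota> \<and> (\<forall>x y. \<iota> (x * y) = \<iota> x * \<iota> y) \<and> \<iota> 1 = 1 \<and>
     (\<forall>b. norm (\<iota> b) = norm b) \<and>
     bounded_linear E \<and> (\<forall>b. E (\<iota> b) = b) \<and>
     (\<forall>b1 x b2. E (\<iota> b1 * x * \<iota> b2) = b1 * E x * b2)"

definition invertible_elem :: "'b::ring_1 \<Rightarrow> bool" where
  "invertible_elem x \<longleftrightarrow> (\<exists>y. x * y = 1 \<and> y * x = 1)"

text \<open>Bounded (complex) multilinear maps B^n \<rightarrow> B, represented as functions on
lists of length n.\<close>

definition bounded_multilinear_map ::
  "'b::{real_normed_algebra_1,banach} \<Rightarrow> nat \<Rightarrow> ('b list \<Rightarrow> 'b) \<Rightarrow> bool" where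
  "bounded_multilinear_map j n f \<longleftrightarrow>
     (\<forall>xs k x y. length xs = n \<and> k < n \<longrightarrow>
        f (xs[k := x + y]) = f (xs[k := x]) + f (xs[k := y])) \<and>
     (\<forall>xs k x c. length xs = n \<and> k < n \<longrightarrow>
        f (xs[k := c *\<^sub>R x]) = c *\<^sub>R f (xs[k := x])) \<and>
     (\<forall>xs k x. length xs = n \<and> k < n \<longrightarrow>
        f (xs[k := j * x]) = j * f (xs[k := x])) \<and>
     (\<exists>K. \<forall>xs. length xs = n \<longrightarrow> norm (f xs) \<le> K * prod_list (map norm xs))"

text \<open>An elementary tensor d_1 \<otimes> ... \<otimes> d_k \<otimes> b_0 (k \<ge> 0; k = 0 is b_0 \<Omega>)
is a pair (ds, b0) with ds :: ('i \<Rightarrow> 'b) list the elements of D = l^1(I,B).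
A Fock vector is a finite formal sum of elementary tensors (a list); the
empty list is 0.  Operators are given on elementary tensors and extended
additively.\<close>

type_synonym ('i,'b) ftensor = "('i \<Rightarrow> 'b) list \<times> 'b"
type_synonym ('i,'b) fvec = "('i,'b) ftensor list"

definition delta :: "'i \<Rightarrow> 'i \<Rightarrow> 'b::zero_neq_one" where
  "delta i = (\<lambda>j. if j = i then 1 else 0)"

definition lmulD :: "'b::times \<Rightarrow> ('i \<Rightarrow> 'b) \<Rightarrow> ('i \<Rightarrow> 'b)" where
  "lmulD b d = (\<lambda>j. b * d j)"

definition Omega :: "('i,'b::one) fvec" where
  "Omega = [([], 1)]"

definition opapp :: "(('i,'b) ftensor \<Rightarrow> ('i,'b) fvec) \<Rightarrow> ('i,'b) fvec \<Rightarrow> ('i,'b) fvec" where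
  "opapp T v = concat (map T v)"

fun lamT :: "'b::times \<Rightarrow> ('i,'b) ftensor \<Rightarrow> ('i,'b) fvec" where
  "lamT b ([], b0) = [([], b * b0)]"
| "lamT b (d # ds, b0) = [(lmulD b d # ds, b0)]"

definition LT :: "'i \<Rightarrow> ('i,'b::zero_neq_one) ftensor \<Rightarrow> ('i,'b) fvec" where
  "LT i t = [(delta i # fst t, snd t)]"

definition VT :: "'i \<Rightarrow> nat \<Rightarrow> ('b::ring_1 list \<Rightarrow> 'b) \<Rightarrow> ('i,'b) ftensor \<Rightarrow> ('i,'b) fvec" where
  "VT i n \<alpha> t =
    (if n = 0 then lamT (\<alpha> []) t
     else (let ds = fst t; b0 = snd t; k = length ds;
               c = \<alpha> (map (\<lambda>d. d i) (take n ds)) in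
       if k < n then []
       else if k = n then [([], c * b0)]
       else [(lmulD c (ds ! n) # drop (Suc n) ds, b0)]))"

definition WT :: "'i \<Rightarrow> nat \<Rightarrow> ('b::ring_1 list \<Rightarrow> 'b) \<Rightarrow> ('i,'b) ftensor \<Rightarrow> ('i,'b) fvec" where
  "WT i n \<alpha> t =
    (if n = 0 then opapp (lamT (\<alpha> [])) (LT i t)
     else (let ds = fst t; b0 = snd t; k = length ds;
               c = \<alpha> (map (\<lambda>d. d i) (take n ds)) in
       if k < n then []
       else [(lmulD c (delta i) # drop n ds, b0)]))"

definition XT :: "'i \<Rightarrow> nat \<Rightarrow> (nat \<Rightarrow> 'b::ring_1 list \<Rightarrow> 'b) \<Rightarrow> ('i,'b) ftensor \<Rightarrow> ('i,'b) fvec" where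
  "XT i N \<alpha> t = concat (map (\<lambda>n. VT i n (\<alpha> n) t @ WT i n (\<alpha> n) t) [0..<Suc N])"

definition fockP :: "('i,'b::ring_1) fvec \<Rightarrow> 'b" where
  "fockP v = sum_list (map snd (filter (\<lambda>t. fst t = []) v))"

definition fock_word :: "'i \<Rightarrow> nat \<Rightarrow> (nat \<Rightarrow> 'b::ring_1 list \<Rightarrow> 'b) \<Rightarrow> 'b list \<Rightarrow> ('i,'b) fvec" where
  "fock_word i N \<alpha> bs = foldr (\<lambda>b v. opapp (lamT b) (opapp (XT i N \<alpha>) v)) bs Omega"

definition fockE_word :: "'i \<Rightarrow> nat \<Rightarrow> (nat \<Rightarrow> 'b::ring_1 list \<Rightarrow> 'b) \<Rightarrow> 'b list \<Rightarrow> 'b" where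
  "fockE_word i N \<alpha> bs = fockP (fock_word i N \<alpha> bs)"

definition alg_word :: "('b \<Rightarrow> 'a::ring_1) \<Rightarrow> 'a \<Rightarrow> 'b list \<Rightarrow> 'a" where
  "alg_word \<iota> a bs = foldr (\<lambda>b y. \<iota> b * a * y) bs 1"

end

theory Submission
  imports Defs
begin

text \<open>The operators \<lambda>(b), V_{i,m} and W_{i,m} transform the i-th coordinates
d_1(i), \<dots>, d_k(i), b_0 of an elementary tensor among themselves, and \<E> only sees the
B\<Omega>-component.  Hence the \<Omega>-coefficient of b_0 X b_1 X \<dots> b_k X \<Omega> is a finite
expression in b_0, \<dots>, b_k and the \<alpha>_m, computed on coordinates by \<open>omega_coeff\<close>.
For k = n this expression is triangular: \<alpha>_m with m > n does not occur, and \<alpha>_n occurs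
only in the single term b_0 \<alpha>_n(b_1 \<alpha>_0, \<dots>, b_n \<alpha>_0), obtained by applying W_{i,0}
n times and then V_{i,n}.  So \<alpha>_n can be defined recursively by solving the n-th
moment equation for this term, using a right inverse of \<alpha>_0 = E(a).  The solution is
bounded multilinear because the moments E(b_0 a \<dots> b_k a) and the lower-order Fock
expressions are bounded multilinear in b_1, \<dots>, b_k.\<close>

section \<open>Complex-linear and bounded multilinear maps\<close>

definition j_linear :: "'b::real_normed_algebra_1 \<Rightarrow> ('b \<Rightarrow> 'b) \<Rightarrow> bool" where
  "j_linear j f \<longleftrightarrow> linear f \<and> (\<forall>x. f (j * x) = j * f x)"

lemma j_linear_zero: "j_linear j (\<lambda>x. 0)"
  by (simp add: j_linear_def linear_zero)

lemma j_linear_ident: "j_linear j (\<lambda>x. x)"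
  by (simp add: j_linear_def linear_ident)

lemma j_linear_compose: "j_linear j f \<Longrightarrow> j_linear j g \<Longrightarrow> j_linear j (\<lambda>x. g (f x))"
  using linear_compose[of f g] by (simp add: j_linear_def o_def)

lemma j_linear_add: "j_linear j f \<Longrightarrow> j_linear j g \<Longrightarrow> j_linear j (\<lambda>x. f x + g x)"
  by (simp add: j_linear_def linear_compose_add distrib_left)

lemma j_linear_diff: "j_linear j f \<Longrightarrow> j_linear j g \<Longrightarrow> j_linear j (\<lambda>x. f x - g x)"
  by (simp add: j_linear_def linear_compose_sub right_diff_distrib)

lemma j_linear_sum: "(\<And>m. m \<in> S \<Longrightarrow> j_linear j (f m)) \<Longrightarrow> j_linear j (\<lambda>x. \<Sum>m\<in>S. f m x)"
  by (simp add: j_linear_def linear_compose_sum sum_distrib_left)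

lemma j_linear_mult_right: "j_linear j (\<lambda>x. x * c)"
  by (simp add: j_linear_def bounded_linear.linear[OF bounded_linear_mult_left] mult.assoc)

lemma j_linear_mult_left: "(\<And>x. j * x = x * j) \<Longrightarrow> j_linear j (\<lambda>x. c * x)"
  by (simp add: j_linear_def bounded_linear.linear[OF bounded_linear_mult_right])
    (metis mult.assoc)

lemma j_linear_case_option:
  "(\<And>s. j_linear j (\<lambda>x. F x s)) \<Longrightarrow> j_linear j (\<lambda>x. case_option 0 (F x) S)"
  by (cases S) (simp_all add: j_linear_zero)

abbreviation norm_prod :: "'b::real_normed_vector list \<Rightarrow> real" where
  "norm_prod xs \<equiv> prod_list (map norm xs)"

lemma norm_prod_nonneg [simp]: "0 \<le> norm_prod xs"
  by (induction xs) auto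

lemma bounded_multilinear_map_iff:
  "bounded_multilinear_map j n f \<longleftrightarrow>
     (\<forall>xs k. length xs = n \<and> k < n \<longrightarrow> j_linear j (\<lambda>x. f (xs[k := x]))) \<and>
     (\<exists>K. \<forall>xs. length xs = n \<longrightarrow> norm (f xs) \<le> K * norm_prod xs)"
  unfolding bounded_multilinear_map_def j_linear_def linear_iff by blast

lemma bounded_multilinear_mapI:
  assumes "\<And>xs k. length xs = n \<Longrightarrow> k < n \<Longrightarrow> j_linear j (\<lambda>x. f (xs[k := x]))"
    and "\<And>xs. length xs = n \<Longrightarrow> norm (f xs) \<le> K * norm_prod xs"
  shows "bounded_multilinear_map j n f"
  using assms by (auto simp: bounded_multilinear_map_iff)

lemma bounded_multilinear_map_linear:
  "bounded_multilinear_map j n f \<Longrightarrow> length xs = n \<Longrightarrow> k < n \<Longrightarrow> j_linear j (\<lambda>x. f (xs[k := x]))"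
  by (simp add: bounded_multilinear_map_iff)

lemma bounded_multilinear_map_bound:
  assumes "bounded_multilinear_map j n f"
  obtains K where "0 \<le> K" "\<And>xs. length xs = n \<Longrightarrow> norm (f xs) \<le> K * norm_prod xs"
proof -
  obtain K where K: "\<And>xs. length xs = n \<Longrightarrow> norm (f xs) \<le> K * norm_prod xs"
    using assms by (auto simp: bounded_multilinear_map_iff)
  have "K * norm_prod xs \<le> \<bar>K\<bar> * norm_prod xs" for xs :: "'a list"
    by (simp add: mult_right_mono)
  with K that show thesis by (meson abs_ge_zero order_trans)
qed

lemma bounded_multilinear_map_arity_0: "bounded_multilinear_map j 0 f"
  by (rule bounded_multilinear_mapI[where K = "norm (f [])"]) auto

lemma bounded_multilinear_map_zero: "bounded_multilinear_map j n (\<lambda>_. 0)"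
  by (rule bounded_multilinear_mapI[where K = 0]) (auto simp: j_linear_zero)

lemma bounded_multilinear_map_diff:
  assumes f: "bounded_multilinear_map j n f" and g: "bounded_multilinear_map j n g"
  shows "bounded_multilinear_map j n (\<lambda>xs. f xs - g xs)"
proof -
  obtain K1 K2 where
    K1: "\<And>xs. length xs = n \<Longrightarrow> norm (f xs) \<le> K1 * norm_prod xs" and
    K2: "\<And>xs. length xs = n \<Longrightarrow> norm (g xs) \<le> K2 * norm_prod xs"
    using f g by (auto simp: bounded_multilinear_map_iff)
  show ?thesis
  proof (rule bounded_multilinear_mapI[where K = "K1 + K2"])
    show "j_linear j (\<lambda>x. f (xs[k := x]) - g (xs[k := x]))" if "length xs = n" "k < n" for xs k
      using that f g by (intro j_linear_diff bounded_multilinear_map_linear)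
    show "norm (f xs - g xs) \<le> (K1 + K2) * norm_prod xs" if "length xs = n" for xs
      using norm_triangle_ineq4[of "f xs" "g xs"] K1[OF that] K2[OF that]
      by (simp add: distrib_right)
  qed
qed

lemma bounded_multilinear_map_rev:
  assumes f: "bounded_multilinear_map j n f"
  shows "bounded_multilinear_map j n (\<lambda>xs. f (rev xs))"
proof -
  obtain K where K: "\<And>xs. length xs = n \<Longrightarrow> norm (f xs) \<le> K * norm_prod xs"
    using f by (auto simp: bounded_multilinear_map_iff)
  show ?thesis
  proof (rule bounded_multilinear_mapI[where K = K])
    show "j_linear j (\<lambda>x. f (rev (xs[k := x])))" if "length xs = n" "k < n" for xs k
      using that by (simp add: rev_update bounded_multilinear_map_linear[OF f])
    show "norm (f (rev xs)) \<le> K * norm_prod xs" if "length xs = n" for xs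
      using K[of "rev xs"] that by (simp add: rev_map[symmetric] prod_list.rev)
  qed
qed

lemma norm_prod_map_mult_right:
  "norm_prod (map (\<lambda>c. c * u) xs) \<le> norm (u::'b::real_normed_algebra_1) ^ length xs * norm_prod xs"
proof (induction xs)
  case (Cons x xs)
  have "norm (x * u) * norm_prod (map (\<lambda>c. c * u) xs)
      \<le> (norm x * norm u) * (norm u ^ length xs * norm_prod xs)"
    by (rule mult_mono[OF norm_mult_ineq Cons.IH _ norm_prod_nonneg]) simp
  then show ?case by (simp add: algebra_simps)
qed simp

lemma bounded_multilinear_map_fix_first:
  assumes f: "bounded_multilinear_map j (Suc n) f"
  shows "bounded_multilinear_map j n (\<lambda>xs. f (1 # map (\<lambda>c. c * u) xs))"
proof -
  obtain K where "0 \<le> K" and K: "\<And>xs. length xs = Suc n \<Longrightarrow> norm (f xs) \<le> K * norm_prod xs"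
    using bounded_multilinear_map_bound[OF f] by blast
  show ?thesis
  proof (rule bounded_multilinear_mapI[where K = "K * norm u ^ n"])
    fix xs :: "'a list" and k assume xs: "length xs = n" "k < n"
    have "(\<lambda>x. f (1 # map (\<lambda>c. c * u) (xs[k := x])))
        = (\<lambda>x. f ((1 # map (\<lambda>c. c * u) xs)[Suc k := x * u]))"
      by (simp add: map_update)
    moreover have "j_linear j (\<lambda>x. f ((1 # map (\<lambda>c. c * u) xs)[Suc k := x * u]))"
      using xs
      by (intro j_linear_compose[OF j_linear_mult_right bounded_multilinear_map_linear[OF f]]) simp_all
    ultimately show "j_linear j (\<lambda>x. f (1 # map (\<lambda>c. c * u) (xs[k := x])))"
      by simp
  next
    fix xs :: "'a list" assume xs: "length xs = n"
    have "norm (f (1 # map (\<lambda>c. c * u) xs)) \<le> K * norm_prod (map (\<lambda>c. c * u) xs)"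
      using K[of "1 # map (\<lambda>c. c * u) xs"] xs by simp
    also have "\<dots> \<le> K * (norm u ^ n * norm_prod xs)"
      using norm_prod_map_mult_right[of u xs] xs \<open>0 \<le> K\<close> by (simp add: mult_left_mono)
    finally show "norm (f (1 # map (\<lambda>c. c * u) xs)) \<le> K * norm u ^ n * norm_prod xs"
      by (simp add: mult.assoc)
  qed
qed

lemma j_linear_mult_left_comp: "(\<And>x. j * x = x * j) \<Longrightarrow> j_linear j g \<Longrightarrow> j_linear j (\<lambda>x. c * g x)"
  using j_linear_compose[OF _ j_linear_mult_left] by blast

lemma j_linear_mult_right_comp: "j_linear j g \<Longrightarrow> j_linear j (\<lambda>x. g x * c)"
  using j_linear_compose[OF _ j_linear_mult_right] by blast

lemma bounded_multilinear_map_linear_comp: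
  "bounded_multilinear_map j m f \<Longrightarrow> length xs = m \<Longrightarrow> k < m \<Longrightarrow> j_linear j g
     \<Longrightarrow> j_linear j (\<lambda>x. f (xs[k := g x]))"
  using j_linear_compose[OF _ bounded_multilinear_map_linear] by blast

section \<open>The moments of X on coordinates\<close>

definition coords :: "'i \<Rightarrow> ('i,'b) ftensor \<Rightarrow> 'b list \<times> 'b" where
  "coords i t = (map (\<lambda>d. d i) (fst t), snd t)"

text \<open>\<open>coordV \<alpha> m b\<close> and \<open>coordW \<alpha> m b\<close> are \<lambda>(b) V_{i,m}(\<alpha> m) and \<lambda>(b) W_{i,m}(\<alpha> m)
  on coordinates; for m = 0 they give \<lambda>(b) \<lambda>(\<alpha>_0) and \<lambda>(b) \<lambda>(\<alpha>_0) L_i, as \<open>take 0 cs = []\<close>.\<close>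

fun coordV :: "(nat \<Rightarrow> 'b::ring_1 list \<Rightarrow> 'b) \<Rightarrow> nat \<Rightarrow> 'b \<Rightarrow> 'b list \<times> 'b \<Rightarrow> ('b list \<times> 'b) option" where
  "coordV \<alpha> m b (cs, b0) =
     (if length cs < m then None
      else if length cs = m then Some ([], b * (\<alpha> m cs * b0))
      else Some (b * (\<alpha> m (take m cs) * cs ! m) # drop (Suc m) cs, b0))"

fun coordW :: "(nat \<Rightarrow> 'b::ring_1 list \<Rightarrow> 'b) \<Rightarrow> nat \<Rightarrow> 'b \<Rightarrow> 'b list \<times> 'b \<Rightarrow> ('b list \<times> 'b) option" where
  "coordW \<alpha> m b (cs, b0) =
     (if length cs < m then None else Some (b * \<alpha> m (take m cs) # drop m cs, b0))"

text \<open>\<open>omega_coeff \<alpha> N w s\<close> is the \<Omega>-coefficient of b_k X \<dots> b_1 X applied to a tensor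
  with coordinates s, for \<open>w = [b_1, \<dots>, b_k]\<close>: the letters are listed in the order in which
  they act, the reverse of their order in \<open>fockE_word\<close>.\<close>

primrec omega_coeff :: "(nat \<Rightarrow> 'b::ring_1 list \<Rightarrow> 'b) \<Rightarrow> nat \<Rightarrow> 'b list \<Rightarrow> 'b list \<times> 'b \<Rightarrow> 'b" where
  "omega_coeff \<alpha> N [] s = (if fst s = [] then snd s else 0)"
| "omega_coeff \<alpha> N (b # w) s =
     (\<Sum>m\<le>N. case_option 0 (omega_coeff \<alpha> N w) (coordV \<alpha> m b s)
            + case_option 0 (omega_coeff \<alpha> N w) (coordW \<alpha> m b s))"

lemma opapp_append: "opapp T (u @ v) = opapp T u @ opapp T v"
  by (simp add: opapp_def)

lemma opapp_concat: "opapp T (concat vs) = concat (map (opapp T) vs)"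
  by (induction vs) (simp_all add: opapp_def)

lemma sum_list_map_concat:
  "sum_list (map f (concat xss)) = sum_list (map (\<lambda>xs. sum_list (map f xs)) xss)"
  by (induction xss) simp_all

lemma coords_lamT_VT:
  "sum_list (map (\<lambda>t'. F (coords i t')) (opapp (lamT b) (VT i m (\<alpha> m) t)))
     = case_option 0 F (coordV \<alpha> m b (coords i t))"
proof (cases t)
  case (Pair ds b0)
  show ?thesis
  proof (cases "m = 0")
    case True
    then show ?thesis using Pair by (cases ds) (auto simp: VT_def coords_def opapp_def lmulD_def)
  next
    case False
    then show ?thesis using Pair
      by (auto simp: VT_def coords_def opapp_def lmulD_def Let_def take_map drop_map mult.assoc)
  qed
qed

lemma coords_lamT_WT:
  "sum_list (map (\<lambda>t'. F (coords i t')) (opapp (lamT b) (WT i m (\<alpha> m) t)))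
     = case_option 0 F (coordW \<alpha> m b (coords i t))"
proof (cases t)
  case (Pair ds b0)
  then show ?thesis
    by (cases "m = 0")
      (auto simp: WT_def LT_def coords_def opapp_def lmulD_def delta_def Let_def take_map drop_map)
qed

lemma omega_coeff_lamT_XT:
  "sum_list (map (\<lambda>t'. omega_coeff \<alpha> N w (coords i t')) (opapp (lamT b) (XT i N \<alpha> t)))
     = omega_coeff \<alpha> N (b # w) (coords i t)"
  by (simp del: upt_Suc add: XT_def opapp_concat opapp_append sum_list_map_concat o_def
      coords_lamT_VT coords_lamT_WT interv_sum_list_conv_sum_set_nat atLeastLessThanSuc_atLeastAtMost
      atLeast0AtMost)

lemma fockP_foldr:
  "fockP (foldr (\<lambda>b v. opapp (lamT b) (opapp (XT i N \<alpha>) v)) bs v)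
     = sum_list (map (\<lambda>t. omega_coeff \<alpha> N (rev bs) (coords i t)) v)"
proof (induction bs arbitrary: v rule: rev_induct)
  case Nil
  show ?case by (induction v) (auto simp: fockP_def coords_def)
next
  case (snoc b bs)
  then show ?case
    by (simp del: omega_coeff.simps add: opapp_concat opapp_def[of "XT i N \<alpha>"]
        sum_list_map_concat o_def omega_coeff_lamT_XT)
qed

lemma fockE_word_eq_omega_coeff: "fockE_word i N \<alpha> bs = omega_coeff \<alpha> N (rev bs) ([], 1)"
  by (simp add: fockE_word_def fock_word_def fockP_foldr Omega_def coords_def)

section \<open>Triangularity of the moments\<close>

lemma case_option_mult_left: "case_option 0 (\<lambda>s. c * f s) S = (c::'b::ring_1) * case_option 0 f S"
  by (cases S) simp_all

lemma omega_coeff_snoc: "omega_coeff \<alpha> N (w @ [b]) s = b * omega_coeff \<alpha> N (w @ [1]) s"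
proof (induction w arbitrary: s)
  case Nil
  have "case_option 0 (omega_coeff \<alpha> N []) (coordV \<alpha> m b s)
      = b * case_option 0 (omega_coeff \<alpha> N []) (coordV \<alpha> m 1 s)"
    "case_option 0 (omega_coeff \<alpha> N []) (coordW \<alpha> m b s)
      = b * case_option 0 (omega_coeff \<alpha> N []) (coordW \<alpha> m 1 s)"
    for m by (cases s; simp)+
  then show ?case by (simp add: sum_distrib_left distrib_left)
next
  case (Cons b' w)
  have IH: "omega_coeff \<alpha> N (w @ [b]) = (\<lambda>s. b * omega_coeff \<alpha> N (w @ [1]) s)"
    by (rule ext) (rule Cons.IH)
  show ?case
    by (simp only: append_Cons omega_coeff.simps IH case_option_mult_left sum_distrib_left
        distrib_left)
qed

definition trunc_family :: "nat \<Rightarrow> (nat \<Rightarrow> 'b list \<Rightarrow> 'b::zero) \<Rightarrow> nat \<Rightarrow> 'b list \<Rightarrow> 'b" where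
  "trunc_family n \<alpha> = (\<lambda>m. if m < n then \<alpha> m else (\<lambda>_. 0))"

text \<open>\<open>leading_term \<alpha> n w cs b0\<close> is the contribution to \<open>omega_coeff \<alpha> N w (cs, b0)\<close> of
  the path that applies W_{i,0} with all letters but the last and then V_{i,n} with the last
  one; when \<open>length cs + length w = n + 1\<close> it is the only term involving \<alpha> n.\<close>

definition leading_term :: "(nat \<Rightarrow> 'b::ring_1 list \<Rightarrow> 'b) \<Rightarrow> nat \<Rightarrow> 'b list \<Rightarrow> 'b list \<Rightarrow> 'b \<Rightarrow> 'b" where
  "leading_term \<alpha> n w cs b0 =
     (if w \<noteq> [] \<and> length cs + length w = Suc n
      then last w * (\<alpha> n (rev (map (\<lambda>b. b * \<alpha> 0 []) (butlast w)) @ cs) * b0) else 0)"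

lemma leading_term_Cons:
  "leading_term \<alpha> n (b # w) cs b0 =
     (if w = [] \<and> length cs = n then b * (\<alpha> n cs * b0)
      else leading_term \<alpha> n w (b * \<alpha> 0 [] # cs) b0)"
  by (cases "w = []") (auto simp: leading_term_def)

lemma omega_coeff_trunc_family:
  assumes n: "1 \<le> n" "n \<le> N"
  shows "length cs + length w \<le> Suc n \<Longrightarrow>
    omega_coeff \<alpha> N w (cs, b0)
      = omega_coeff (trunc_family n \<alpha>) N w (cs, b0) + leading_term \<alpha> n w cs b0"
proof (induction w arbitrary: cs b0)
  case Nil
  then show ?case by (simp add: leading_term_def)
next
  case (Cons b w)
  let ?\<beta> = "trunc_family n \<alpha>"
  have len: "length cs + length w \<le> n" using Cons.prems by simp
  have shorter: "case_option 0 (omega_coeff \<alpha> N w) S = case_option 0 (omega_coeff ?\<beta> N w) S"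
    if "\<And>cs' b0'. S = Some (cs', b0') \<Longrightarrow> length cs' \<le> length cs" for S
    using that Cons.IH len by (cases S) (auto simp: leading_term_def)
  define T where "T \<beta> m = case_option 0 (omega_coeff \<beta> N w) (coordV \<beta> m b (cs, b0))
      + case_option 0 (omega_coeff \<beta> N w) (coordW \<beta> m b (cs, b0))" for \<beta> m
  have T: "T \<alpha> m = T ?\<beta> m + (if m = 0 then leading_term \<alpha> n w (b * \<alpha> 0 [] # cs) b0 else 0)
      + (if m = n \<and> length cs = n then b * (\<alpha> n cs * b0) else 0)" for m
  proof (cases "m < n")
    case True
    have "case_option 0 (omega_coeff \<alpha> N w) (coordV \<alpha> m b (cs, b0))
        = case_option 0 (omega_coeff ?\<beta> N w) (coordV \<alpha> m b (cs, b0))"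
      by (rule shorter) (auto split: if_splits)
    moreover have "case_option 0 (omega_coeff \<alpha> N w) (coordW \<alpha> m b (cs, b0))
        = case_option 0 (omega_coeff ?\<beta> N w) (coordW \<alpha> m b (cs, b0))
          + (if m = 0 then leading_term \<alpha> n w (b * \<alpha> 0 [] # cs) b0 else 0)"
    proof (cases "m = 0")
      case True
      then show ?thesis using Cons len by simp
    next
      case False
      then show ?thesis by (simp only: if_False add_0_right, intro shorter) (auto split: if_splits)
    qed
    ultimately show ?thesis using True by (simp add: T_def trunc_family_def)
  next
    case False
    then show ?thesis
      using len n by (cases "m = n \<and> length cs = n") (auto simp: T_def trunc_family_def)
  qed
  have "omega_coeff \<alpha> N (b # w) (cs, b0) = (\<Sum>m\<le>N. T \<alpha> m)"
    by (simp add: T_def)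
  also have "\<dots> = (\<Sum>m\<le>N. T ?\<beta> m) + leading_term \<alpha> n w (b * \<alpha> 0 [] # cs) b0
      + (if length cs = n then b * (\<alpha> n cs * b0) else 0)"
    using n by (simp add: T sum.distrib sum.If_cases)
  also have "\<dots> = omega_coeff ?\<beta> N (b # w) (cs, b0) + leading_term \<alpha> n (b # w) cs b0"
    using len by (auto simp: T_def leading_term_Cons leading_term_def)
  finally show ?case .
qed

section \<open>Multilinearity in the letters\<close>

definition coordwise_linear :: "'b::real_normed_algebra_1 \<Rightarrow> ('b list \<times> 'b \<Rightarrow> 'b) \<Rightarrow> bool" where
  "coordwise_linear j F \<longleftrightarrow>
     (\<forall>cs k b0. k < length cs \<longrightarrow> j_linear j (\<lambda>x. F (cs[k := x], b0))) \<and>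
     (\<forall>cs. j_linear j (\<lambda>x. F (cs, x)))"

lemma coordwise_linear_update:
  "coordwise_linear j F \<Longrightarrow> k < length cs \<Longrightarrow> j_linear j g \<Longrightarrow> j_linear j (\<lambda>x. F (cs[k := g x], b0))"
  using j_linear_compose[of j g "\<lambda>x. F (cs[k := x], b0)"] by (simp add: coordwise_linear_def)

lemma coordwise_linear_Cons_update:
  "coordwise_linear j F \<Longrightarrow> k < length cs \<Longrightarrow> j_linear j g \<Longrightarrow> j_linear j (\<lambda>x. F (c # cs[k := g x], b0))"
  using coordwise_linear_update[of j F "Suc k" "c # cs"] by simp

lemma coordwise_linear_head:
  "coordwise_linear j F \<Longrightarrow> j_linear j g \<Longrightarrow> j_linear j (\<lambda>x. F (g x # cs, b0))"
  using coordwise_linear_update[of j F 0 "0 # cs"] by simp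

lemma coordwise_linear_last:
  "coordwise_linear j F \<Longrightarrow> j_linear j g \<Longrightarrow> j_linear j (\<lambda>x. F (cs, g x))"
  using j_linear_compose[of j g "\<lambda>x. F (cs, x)"] by (simp add: coordwise_linear_def)

lemmas coordwise_linear_intros =
  coordwise_linear_update coordwise_linear_Cons_update coordwise_linear_head coordwise_linear_last
  j_linear_mult_left_comp j_linear_mult_right_comp bounded_multilinear_map_linear_comp
  j_linear_ident j_linear_zero

lemma coordwise_linear_coordV:
  assumes jc: "\<And>x. j * x = x * j" and \<alpha>: "bounded_multilinear_map j m (\<alpha> m)"
    and F: "coordwise_linear j F"
  shows "coordwise_linear j (\<lambda>s. case_option 0 F (coordV \<alpha> m b s))"
  unfolding coordwise_linear_def
proof (intro conjI allI impI)
  fix cs :: "'a list" and k b0 assume k: "k < length cs"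
  consider "length cs < m" | "length cs = m" | "k < m" "m < length cs" | "k = m" "m < length cs"
    | "m < k"
    using k by linarith
  then show "j_linear j (\<lambda>x. case_option 0 F (coordV \<alpha> m b (cs[k := x], b0)))"
    by cases (use k \<alpha> in \<open>auto intro!: coordwise_linear_intros F jc
        simp: take_update_swap drop_update_swap list_update_beyond\<close>)
next
  fix cs :: "'a list"
  show "j_linear j (\<lambda>x. case_option 0 F (coordV \<alpha> m b (cs, x)))"
    by (cases "length cs < m"; cases "length cs = m") (auto intro!: coordwise_linear_intros F jc)
qed

lemma coordwise_linear_coordW:
  assumes jc: "\<And>x. j * x = x * j" and \<alpha>: "bounded_multilinear_map j m (\<alpha> m)"
    and F: "coordwise_linear j F"
  shows "coordwise_linear j (\<lambda>s. case_option 0 F (coordW \<alpha> m b s))"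
  unfolding coordwise_linear_def
proof (intro conjI allI impI)
  fix cs :: "'a list" and k b0 assume k: "k < length cs"
  consider "length cs < m" | "k < m" "m \<le> length cs" | "m \<le> k"
    using k by linarith
  then show "j_linear j (\<lambda>x. case_option 0 F (coordW \<alpha> m b (cs[k := x], b0)))"
    by cases (use k \<alpha> in \<open>auto intro!: coordwise_linear_intros F jc
        simp: take_update_swap drop_update_swap list_update_beyond\<close>)
next
  fix cs :: "'a list"
  show "j_linear j (\<lambda>x. case_option 0 F (coordW \<alpha> m b (cs, x)))"
    by (cases "length cs < m") (auto intro!: coordwise_linear_intros F)
qed

lemma coordwise_linear_add:
  "coordwise_linear j F \<Longrightarrow> coordwise_linear j G \<Longrightarrow> coordwise_linear j (\<lambda>s. F s + G s)"
  by (simp add: coordwise_linear_def j_linear_add)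

lemma coordwise_linear_sum:
  "(\<And>m. m \<in> S \<Longrightarrow> coordwise_linear j (F m)) \<Longrightarrow> coordwise_linear j (\<lambda>s. \<Sum>m\<in>S. F m s)"
  by (simp add: coordwise_linear_def j_linear_sum)

lemma coordwise_linear_omega_coeff:
  assumes jc: "\<And>x. j * x = x * j" and \<alpha>: "\<And>m. m \<le> N \<Longrightarrow> bounded_multilinear_map j m (\<alpha> m)"
  shows "coordwise_linear j (omega_coeff \<alpha> N w)"
proof (induction w)
  case Nil
  have "j_linear j (\<lambda>x. if cs = [] then x else 0)" for cs :: "'a list"
    by (cases "cs = []") (simp_all add: j_linear_ident j_linear_zero)
  then show ?case by (auto simp: coordwise_linear_def j_linear_zero cong: if_cong)
next
  case (Cons b w)
  then show ?case
    unfolding omega_coeff.simps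
    by (intro coordwise_linear_sum coordwise_linear_add coordwise_linear_coordV
        coordwise_linear_coordW jc \<alpha>) simp_all
qed

lemma j_linear_coordV_letter:
  assumes jc: "\<And>x. j * x = x * j" and F: "coordwise_linear j F"
  shows "j_linear j (\<lambda>x. case_option 0 F (coordV \<alpha> m x s))"
  by (cases s, cases "length (fst s) < m"; cases "length (fst s) = m")
    (auto intro!: coordwise_linear_intros F jc)

lemma j_linear_coordW_letter:
  assumes F: "coordwise_linear j F"
  shows "j_linear j (\<lambda>x. case_option 0 F (coordW \<alpha> m x s))"
  by (cases s, cases "length (fst s) < m") (auto intro!: coordwise_linear_intros F)

lemma j_linear_omega_coeff_letter:
  assumes jc: "\<And>x. j * x = x * j" and \<alpha>: "\<And>m. m \<le> N \<Longrightarrow> bounded_multilinear_map j m (\<alpha> m)"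
  shows "k < length w \<Longrightarrow> j_linear j (\<lambda>x. omega_coeff \<alpha> N (w[k := x]) s)"
proof (induction w arbitrary: k s)
  case (Cons b w)
  have F: "coordwise_linear j (omega_coeff \<alpha> N w)"
    by (rule coordwise_linear_omega_coeff[OF jc \<alpha>])
  show ?case
  proof (cases k)
    case 0
    then show ?thesis
      by (simp, intro j_linear_sum j_linear_add j_linear_coordV_letter j_linear_coordW_letter jc F)
  next
    case (Suc k')
    then show ?thesis using Cons
      by (simp, intro j_linear_sum j_linear_add j_linear_case_option) simp_all
  qed
qed simp

section \<open>Norm bounds\<close>

lemma norm_mult_mult_le:
  "norm (x * (y * z)) \<le> norm x * (norm y * norm (z::'a::real_normed_algebra))"
  by (metis mult_left_mono norm_ge_zero norm_mult_ineq order_trans)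

lemma coordV_weight_le:
  fixes \<alpha> :: "nat \<Rightarrow> 'b::real_normed_algebra_1 list \<Rightarrow> 'b"
  assumes A: "\<And>xs. length xs = m \<Longrightarrow> norm (\<alpha> m xs) \<le> A * norm_prod xs"
    and step: "coordV \<alpha> m b (cs, b0) = Some (cs', b0')"
  shows "norm_prod cs' * norm b0' \<le> A * (norm b * (norm_prod cs * norm b0))"
proof -
  consider "length cs = m" | "m < length cs"
    using step by (auto split: if_splits)
  then show ?thesis
  proof cases
    case 1
    then have "cs' = []" "b0' = b * (\<alpha> m cs * b0)" using step by auto
    moreover have "norm b * (norm (\<alpha> m cs) * norm b0) \<le> norm b * (A * norm_prod cs * norm b0)"
      using A[of cs] 1 by (intro mult_left_mono mult_right_mono) auto
    ultimately show ?thesis using norm_mult_mult_le[of b "\<alpha> m cs" b0] by (simp add: algebra_simps)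
  next
    case 2
    define c where "c = b * (\<alpha> m (take m cs) * cs ! m)"
    define P where "P = norm_prod (drop (Suc m) cs) * norm b0"
    have "cs' = c # drop (Suc m) cs" "b0' = b0"
      using step 2 by (auto simp: c_def)
    then have lhs: "norm_prod cs' * norm b0' = norm c * P"
      by (simp add: P_def)
    have "cs = take m cs @ cs ! m # drop (Suc m) cs"
      using 2 by (simp add: Cons_nth_drop_Suc)
    then have "norm_prod cs = norm_prod (take m cs) * (norm (cs ! m) * norm_prod (drop (Suc m) cs))"
      by (metis list.simps(9) map_append prod_list.Cons prod_list.append)
    then have rhs: "A * (norm b * (norm_prod cs * norm b0))
        = norm b * (A * norm_prod (take m cs) * norm (cs ! m)) * P"
      by (simp add: P_def algebra_simps)
    have "norm c \<le> norm b * (norm (\<alpha> m (take m cs)) * norm (cs ! m))"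
      unfolding c_def by (rule norm_mult_mult_le)
    also have "\<dots> \<le> norm b * (A * norm_prod (take m cs) * norm (cs ! m))"
      using A[of "take m cs"] 2 by (intro mult_left_mono mult_right_mono) auto
    finally show ?thesis
      unfolding lhs rhs by (rule mult_right_mono) (simp add: P_def)
  qed
qed

lemma coordW_weight_le:
  fixes \<alpha> :: "nat \<Rightarrow> 'b::real_normed_algebra_1 list \<Rightarrow> 'b"
  assumes A: "\<And>xs. length xs = m \<Longrightarrow> norm (\<alpha> m xs) \<le> A * norm_prod xs"
    and step: "coordW \<alpha> m b (cs, b0) = Some (cs', b0')"
  shows "norm_prod cs' * norm b0' \<le> A * (norm b * (norm_prod cs * norm b0))"
proof -
  define P where "P = norm_prod (drop m cs) * norm b0"
  have "m \<le> length cs" "cs' = b * \<alpha> m (take m cs) # drop m cs" "b0' = b0"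
    using step by (auto split: if_splits)
  then have lhs: "norm_prod cs' * norm b0' = norm (b * \<alpha> m (take m cs)) * P"
    by (simp add: P_def)
  have "norm_prod cs = norm_prod (take m cs) * norm_prod (drop m cs)"
    by (metis append_take_drop_id map_append prod_list.append)
  then have rhs:
    "A * (norm b * (norm_prod cs * norm b0)) = norm b * (A * norm_prod (take m cs)) * P"
    by (simp add: P_def algebra_simps)
  have "norm (b * \<alpha> m (take m cs)) \<le> norm b * norm (\<alpha> m (take m cs))"
    by (rule norm_mult_ineq)
  also have "\<dots> \<le> norm b * (A * norm_prod (take m cs))"
    using A[of "take m cs"] \<open>m \<le> length cs\<close> by (intro mult_left_mono) auto
  finally show ?thesis
    unfolding lhs rhs by (rule mult_right_mono) (simp add: P_def)
qed

lemma norm_case_option_le: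
  assumes "0 \<le> M" "0 \<le> Q"
    and "\<And>cs b0. norm (F (cs, b0)) \<le> M * (norm_prod cs * norm b0)"
    and "\<And>cs b0. S = Some (cs, b0) \<Longrightarrow> norm_prod cs * norm b0 \<le> Q"
  shows "norm (case_option 0 F S) \<le> M * Q"
proof (cases S)
  case (Some s)
  obtain cs b0 where s: "s = (cs, b0)" by fastforce
  have "norm (F (cs, b0)) \<le> M * (norm_prod cs * norm b0)" by (fact assms(3))
  also have "\<dots> \<le> M * Q"
    using assms(1,4) Some s by (intro mult_left_mono) auto
  finally show ?thesis using Some s by simp
qed (simp add: assms)

lemma omega_coeff_bound:
  fixes \<alpha> :: "nat \<Rightarrow> 'b::real_normed_algebra_1 list \<Rightarrow> 'b"
  assumes "0 \<le> A" and A: "\<And>m xs. m \<le> N \<Longrightarrow> length xs = m \<Longrightarrow> norm (\<alpha> m xs) \<le> A * norm_prod xs"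
  shows "norm (omega_coeff \<alpha> N w (cs, b0))
    \<le> (2 * (real N + 1) * A) ^ length w * norm_prod w * (norm_prod cs * norm b0)"
proof (induction w arbitrary: cs b0)
  case Nil
  then show ?case by simp
next
  case (Cons b w)
  define M where "M = (2 * (real N + 1) * A) ^ length w * norm_prod w"
  define Q where "Q = A * (norm b * (norm_prod cs * norm b0))"
  have "0 \<le> M" "0 \<le> Q" using \<open>0 \<le> A\<close> by (simp_all add: M_def Q_def)
  have V: "norm (case_option 0 (omega_coeff \<alpha> N w) (coordV \<alpha> m b (cs, b0))) \<le> M * Q"
    and W: "norm (case_option 0 (omega_coeff \<alpha> N w) (coordW \<alpha> m b (cs, b0))) \<le> M * Q"
    if "m \<le> N" for m
  proof -
    have IH: "norm (omega_coeff \<alpha> N w (cs', b0')) \<le> M * (norm_prod cs' * norm b0')" for cs' b0'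
      using Cons.IH[of cs' b0'] by (simp add: M_def mult.assoc)
    show "norm (case_option 0 (omega_coeff \<alpha> N w) (coordV \<alpha> m b (cs, b0))) \<le> M * Q"
      by (rule norm_case_option_le[OF \<open>0 \<le> M\<close> \<open>0 \<le> Q\<close> IH])
        (simp add: Q_def coordV_weight_le[where \<alpha> = \<alpha> and m = m and A = A, OF A[OF that]])
    show "norm (case_option 0 (omega_coeff \<alpha> N w) (coordW \<alpha> m b (cs, b0))) \<le> M * Q"
      by (rule norm_case_option_le[OF \<open>0 \<le> M\<close> \<open>0 \<le> Q\<close> IH])
        (simp add: Q_def coordW_weight_le[where \<alpha> = \<alpha> and m = m and A = A, OF A[OF that]])
  qed
  have "norm (omega_coeff \<alpha> N (b # w) (cs, b0))
      \<le> (\<Sum>m\<le>N. norm (case_option 0 (omega_coeff \<alpha> N w) (coordV \<alpha> m b (cs, b0)))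
              + norm (case_option 0 (omega_coeff \<alpha> N w) (coordW \<alpha> m b (cs, b0))))"
    unfolding omega_coeff.simps by (rule order_trans[OF norm_sum sum_mono[OF norm_triangle_ineq]])
  also have "\<dots> \<le> (\<Sum>m\<le>N. M * Q + M * Q)"
    by (intro sum_mono add_mono V W) simp_all
  also have "\<dots> = (2 * (real N + 1) * A) ^ length (b # w) * norm_prod (b # w)
      * (norm_prod cs * norm b0)"
    by (simp add: M_def Q_def algebra_simps)
  finally show ?case .
qed

lemma bounded_multilinear_maps_uniform_bound:
  fixes \<alpha> :: "nat \<Rightarrow> 'b::{real_normed_algebra_1,banach} list \<Rightarrow> 'b"
  assumes "\<And>m. m \<le> N \<Longrightarrow> bounded_multilinear_map j m (\<alpha> m)"
  obtains A where "0 \<le> A"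
    "\<And>m xs. m \<le> N \<Longrightarrow> length xs = m \<Longrightarrow> norm (\<alpha> m xs) \<le> A * norm_prod xs"
proof -
  have "\<forall>m. \<exists>K. m \<le> N \<longrightarrow> 0 \<le> K \<and> (\<forall>xs. length xs = m \<longrightarrow> norm (\<alpha> m xs) \<le> K * norm_prod xs)"
    using assms bounded_multilinear_map_bound by metis
  then obtain K where K: "\<And>m. m \<le> N \<Longrightarrow> 0 \<le> K m"
    "\<And>m xs. m \<le> N \<Longrightarrow> length xs = m \<Longrightarrow> norm (\<alpha> m xs) \<le> K m * norm_prod xs"
    by metis
  show thesis
  proof (rule that[of "\<Sum>m\<le>N. K m"])
    show "0 \<le> (\<Sum>m\<le>N. K m)" by (rule sum_nonneg) (simp add: K(1))
    fix m and xs :: "'b list" assume m: "m \<le> N" and xs: "length xs = m"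
    have "K m \<le> (\<Sum>m\<le>N. K m)" by (rule member_le_sum) (use K(1) m in auto)
    then show "norm (\<alpha> m xs) \<le> (\<Sum>m\<le>N. K m) * norm_prod xs"
      using K(2)[OF m xs] by (meson mult_right_mono norm_prod_nonneg order_trans)
  qed
qed

lemma bounded_multilinear_map_omega_coeff:
  assumes jc: "\<And>x. j * x = x * j" and \<alpha>: "\<And>m. m \<le> N \<Longrightarrow> bounded_multilinear_map j m (\<alpha> m)"
  shows "bounded_multilinear_map j n (\<lambda>w. omega_coeff \<alpha> N w (cs, b0))"
proof -
  obtain A where "0 \<le> A"
    and A: "\<And>m xs. m \<le> N \<Longrightarrow> length xs = m \<Longrightarrow> norm (\<alpha> m xs) \<le> A * norm_prod xs"
    using bounded_multilinear_maps_uniform_bound[OF \<alpha>] by blast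
  let ?K = "(2 * (real N + 1) * A) ^ n * (norm_prod cs * norm b0)"
  show ?thesis
  proof (rule bounded_multilinear_mapI[where K = ?K])
    show "j_linear j (\<lambda>x. omega_coeff \<alpha> N (w[k := x]) (cs, b0))" if "length w = n" "k < n" for w k
      using that by (simp add: j_linear_omega_coeff_letter[OF jc \<alpha>])
    show "norm (omega_coeff \<alpha> N w (cs, b0)) \<le> ?K * norm_prod w" if "length w = n" for w
    proof -
      have "norm (omega_coeff \<alpha> N w (cs, b0))
          \<le> (2 * (real N + 1) * A) ^ length w * norm_prod w * (norm_prod cs * norm b0)"
        by (rule omega_coeff_bound) (use \<open>0 \<le> A\<close> A in auto)
      then show ?thesis using that by (simp add: algebra_simps)
    qed
  qed
qed

section \<open>Moments in A\<close>

lemma alg_word_Cons [simp]: "alg_word \<iota> a (b # bs) = \<iota> b * a * alg_word \<iota> a bs"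
  by (simp add: alg_word_def)

lemma alg_word_append: "alg_word \<iota> a (xs @ ys) = alg_word \<iota> a xs * alg_word \<iota> a ys"
  by (induction xs) (simp_all add: alg_word_def mult.assoc)

lemma alg_word_update:
  "k < length bs \<Longrightarrow>
     alg_word \<iota> a (bs[k := y])
       = alg_word \<iota> a (take k bs) * \<iota> y * (a * alg_word \<iota> a (drop (Suc k) bs))"
  by (simp add: upd_conv_take_nth_drop alg_word_append mult.assoc)

lemma norm_alg_word_le:
  fixes \<iota> :: "'b::real_normed_algebra_1 \<Rightarrow> 'a::real_normed_algebra_1"
  assumes iso: "\<And>b. norm (\<iota> b) = norm b"
  shows "norm (alg_word \<iota> a bs) \<le> norm_prod bs * norm a ^ length bs"
proof (induction bs)
  case Nil
  then show ?case by (simp add: alg_word_def)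
next
  case (Cons b bs)
  have "norm (\<iota> b * a * alg_word \<iota> a bs) \<le> norm (\<iota> b * a) * norm (alg_word \<iota> a bs)"
    by (rule norm_mult_ineq)
  also have "\<dots> \<le> (norm b * norm a) * (norm_prod bs * norm a ^ length bs)"
    using iso norm_mult_ineq[of "\<iota> b" a] by (intro mult_mono Cons.IH) auto
  finally show ?case by (simp add: algebra_simps)
qed

lemma banach_ncps_central: "banach_ncps j \<iota> E \<Longrightarrow> j * x = x * j"
  by (simp add: banach_ncps_def complex_structure_def)

lemma j_linear_expectation_sandwich:
  assumes ncps: "banach_ncps j \<iota> E"
  shows "j_linear j (\<lambda>y. E (P * \<iota> y * Q))"
proof -
  interpret \<iota>: bounded_linear \<iota> using ncps by (simp add: banach_ncps_def)
  interpret E: bounded_linear E using ncps by (simp add: banach_ncps_def)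
  have hom: "\<iota> (x * y) = \<iota> x * \<iota> y" for x y
    using ncps by (simp add: banach_ncps_def)
  have bimod: "E (\<iota> b1 * z * \<iota> b2) = b1 * E z * b2" for b1 z b2
    using ncps by (simp add: banach_ncps_def)
  have "\<iota> 1 = 1"
    using ncps by (simp add: banach_ncps_def)
  have "\<iota> j * x = x * \<iota> j" for x
    using ncps by (simp add: banach_ncps_def complex_structure_def)
  then have "P * \<iota> (j * y) * Q = \<iota> j * (P * \<iota> y * Q) * \<iota> 1" for y
    by (simp add: hom \<open>\<iota> 1 = 1\<close> mult.assoc)
  then have "E (P * \<iota> (j * y) * Q) = j * E (P * \<iota> y * Q)" for y
    by (simp add: bimod)
  moreover have "linear (\<lambda>y. E (P * \<iota> y * Q))"
    by (simp add: linear_iff \<iota>.add \<iota>.scaleR E.add E.scaleR distrib_left distrib_right)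
  ultimately show ?thesis by (simp add: j_linear_def)
qed

lemma expectation_alg_word_Cons:
  assumes ncps: "banach_ncps j \<iota> E"
  shows "E (alg_word \<iota> a (b # bs)) = b * E (alg_word \<iota> a (1 # bs))"
proof -
  have "\<iota> 1 = 1" and bimod: "\<And>b1 x b2. E (\<iota> b1 * x * \<iota> b2) = b1 * E x * b2"
    using ncps by (simp_all add: banach_ncps_def)
  then show ?thesis
    using bimod[of b "a * alg_word \<iota> a bs" 1] by (simp add: mult.assoc)
qed

lemma bounded_multilinear_map_moment:
  assumes ncps: "banach_ncps j \<iota> E"
  shows "bounded_multilinear_map j n (\<lambda>bs. E (alg_word \<iota> a bs))"
proof -
  have iso: "\<And>b. norm (\<iota> b) = norm b" and "bounded_linear E"
    using ncps by (simp_all add: banach_ncps_def)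
  then obtain KE where "0 \<le> KE" and KE: "\<And>x. norm (E x) \<le> norm x * KE"
    using bounded_linear.nonneg_bounded by blast
  show ?thesis
  proof (rule bounded_multilinear_mapI[where K = "KE * norm a ^ n"])
    fix bs :: "'a list" and k assume "length bs = n" "k < n"
    then show "j_linear j (\<lambda>x. E (alg_word \<iota> a (bs[k := x])))"
      by (simp add: alg_word_update j_linear_expectation_sandwich[OF ncps])
  next
    fix bs :: "'a list" assume "length bs = n"
    have "norm (E (alg_word \<iota> a bs)) \<le> norm (alg_word \<iota> a bs) * KE" by (rule KE)
    also have "\<dots> \<le> norm_prod bs * norm a ^ length bs * KE"
      by (intro mult_right_mono norm_alg_word_le iso \<open>0 \<le> KE\<close>)
    finally show "norm (E (alg_word \<iota> a bs)) \<le> KE * norm a ^ n * norm_prod bs"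
      using \<open>length bs = n\<close> by (simp add: algebra_simps)
  qed
qed

section \<open>Recursive construction of the coefficients\<close>

text \<open>With u a right inverse of \<alpha>_0, \<open>moment_defect u M N \<beta> cs\<close> is the value that
  \<alpha>_n(cs) must take for the moment with letters 1, c_1 u, \<dots>, c_n u to equal M, when the
  entries of \<alpha> below n are those of \<beta>.\<close>

definition moment_defect ::
  "'b::ring_1 \<Rightarrow> ('b list \<Rightarrow> 'b) \<Rightarrow> nat \<Rightarrow> (nat \<Rightarrow> 'b list \<Rightarrow> 'b) \<Rightarrow> 'b list \<Rightarrow> 'b" where
  "moment_defect u M N \<beta> cs =
     M (1 # map (\<lambda>c. c * u) cs) - omega_coeff \<beta> N (rev (1 # map (\<lambda>c. c * u) cs)) ([], 1)"

lemma bounded_multilinear_map_moment_defect: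
  assumes jc: "\<And>x. j * x = x * j"
    and M: "bounded_multilinear_map j (Suc n) M"
    and \<beta>: "\<And>m. m \<le> N \<Longrightarrow> bounded_multilinear_map j m (\<beta> m)"
  shows "bounded_multilinear_map j n (moment_defect u M N \<beta>)"
  unfolding moment_defect_def
  by (intro bounded_multilinear_map_diff bounded_multilinear_map_fix_first M
      bounded_multilinear_map_rev[of j "Suc n" "\<lambda>w. omega_coeff \<beta> N w ([], 1)"]
      bounded_multilinear_map_omega_coeff jc \<beta>)

lemma omega_coeff_eq_moment:
  fixes \<alpha> :: "nat \<Rightarrow> 'b::ring_1 list \<Rightarrow> 'b"
  assumes u: "\<alpha> 0 [] * u = 1"
    and defect: "\<And>n. 1 \<le> n \<Longrightarrow> n \<le> N \<Longrightarrow> \<alpha> n = moment_defect u M N (trunc_family n \<alpha>)"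
    and M_Cons: "\<And>b bs. M (b # bs) = b * M (1 # bs)"
    and len: "2 \<le> length bs" "length bs \<le> N + 1"
  shows "omega_coeff \<alpha> N (rev bs) ([], 1) = M bs"
proof -
  obtain b0 rest where bs: "bs = b0 # rest" using len by (cases bs) auto
  define n where "n = length rest"
  have n: "1 \<le> n" "n \<le> N" using len by (simp_all add: bs n_def)
  let ?\<beta> = "trunc_family n \<alpha>"
  have "map (\<lambda>c. c * u) (map (\<lambda>b. b * \<alpha> 0 []) rest) = rest"
    by (induction rest) (simp_all add: mult.assoc u)
  then have top: "\<alpha> n (map (\<lambda>b. b * \<alpha> 0 []) rest)
      = M (1 # rest) - omega_coeff ?\<beta> N (rev (1 # rest)) ([], 1)"
    by (simp add: defect[OF n] moment_defect_def)
  have "omega_coeff \<alpha> N (rev bs) ([], 1)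
      = omega_coeff ?\<beta> N (rev bs) ([], 1) + leading_term \<alpha> n (rev bs) [] 1"
    by (rule omega_coeff_trunc_family[OF n]) (simp add: bs n_def)
  also have "\<dots> = b0 * omega_coeff ?\<beta> N (rev (1 # rest)) ([], 1)
      + b0 * \<alpha> n (map (\<lambda>b. b * \<alpha> 0 []) rest)"
    using omega_coeff_snoc[of ?\<beta> N "rev rest" b0]
    by (simp add: bs n_def leading_term_def rev_map)
  also have "\<dots> = M bs"
    by (simp add: top bs M_Cons[of b0 rest] right_diff_distrib)
  finally show ?thesis .
qed

primrec triangular_family ::
  "((nat \<Rightarrow> 'b list \<Rightarrow> 'b) \<Rightarrow> 'b list \<Rightarrow> 'b) \<Rightarrow> 'b::zero \<Rightarrow> nat \<Rightarrow> nat \<Rightarrow> 'b list \<Rightarrow> 'b" where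
  "triangular_family D a0 0 = (\<lambda>m. if m = 0 then (\<lambda>_. a0) else (\<lambda>_. 0))"
| "triangular_family D a0 (Suc k) =
     (triangular_family D a0 k)(Suc k := D (triangular_family D a0 k))"

lemma triangular_family_entry:
  "triangular_family D a0 k m = (if m \<le> k then triangular_family D a0 m m else (\<lambda>_. 0))"
  by (induction k) (auto simp: le_Suc_eq)

lemma triangular_family_0: "triangular_family D a0 k 0 = (\<lambda>_. a0)"
  by (induction k) simp_all

lemma triangular_family_defect:
  assumes "1 \<le> n" "n \<le> N"
  shows "triangular_family D a0 N n = D (trunc_family n (triangular_family D a0 N))"
proof -
  obtain k where k: "n = Suc k" using assms by (cases n) auto
  have "trunc_family n (triangular_family D a0 N) = triangular_family D a0 k"
    using assms k by (auto simp: trunc_family_def fun_eq_iff triangular_family_entry[of D a0 N]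
        triangular_family_entry[of D a0 k])
  moreover have "triangular_family D a0 N n = triangular_family D a0 n n"
    using assms by (subst triangular_family_entry) simp
  ultimately show ?thesis by (simp add: k)
qed

lemma bounded_multilinear_map_triangular_family:
  assumes "\<And>\<beta> n. (\<And>m. bounded_multilinear_map j m (\<beta> m)) \<Longrightarrow> bounded_multilinear_map j n (D \<beta>)"
  shows "bounded_multilinear_map j m (triangular_family D a0 k m)"
proof (induction k arbitrary: m)
  case 0
  then show ?case by (simp add: bounded_multilinear_map_arity_0 bounded_multilinear_map_zero)
next
  case (Suc k)
  then show ?case by (simp add: assms)
qed

theorem mainTheorem9:
  fixes j :: "'b::{real_normed_algebra_1,banach}"
    and \<iota> :: "'b \<Rightarrow> 'a::{real_normed_algebra_1,banach}"
    and E :: "'a \<Rightarrow> 'b" and a :: 'a and N :: nat and i :: 'i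
  assumes "banach_ncps j \<iota> E"
    and "invertible_elem (E a)"
    and "N \<ge> 1"
  shows "\<exists>\<alpha> :: nat \<Rightarrow> 'b list \<Rightarrow> 'b.
           \<alpha> 0 [] = E a \<and>
           (\<forall>n\<in>{1..N}. bounded_multilinear_map j n (\<alpha> n)) \<and>
           (\<forall>bs. 2 \<le> length bs \<and> length bs \<le> N + 1 \<longrightarrow>
              fockE_word i N \<alpha> bs = E (alg_word \<iota> a bs))"
proof -
  obtain u where u: "E a * u = 1"
    using assms(2) by (auto simp: invertible_elem_def)
  define M where "M bs = E (alg_word \<iota> a bs)" for bs
  define \<alpha> where "\<alpha> = triangular_family (moment_defect u M N) (E a) N"
  have M_Cons: "M (b # bs) = b * M (1 # bs)" for b bs
    unfolding M_def by (rule expectation_alg_word_Cons[OF assms(1)])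
  have \<alpha>0: "\<alpha> 0 [] = E a"
    by (simp add: \<alpha>_def triangular_family_0)
  have "bounded_multilinear_map j n (\<alpha> n)" for n
    unfolding \<alpha>_def M_def
    by (intro bounded_multilinear_map_triangular_family bounded_multilinear_map_moment_defect
        bounded_multilinear_map_moment banach_ncps_central[OF assms(1)] assms(1))
  moreover have "fockE_word i N \<alpha> bs = E (alg_word \<iota> a bs)"
    if "2 \<le> length bs" "length bs \<le> N + 1" for bs
    unfolding fockE_word_eq_omega_coeff M_def[symmetric]
    by (rule omega_coeff_eq_moment[OF _ _ M_Cons that])
      (simp_all add: \<alpha>_def triangular_family_0 u triangular_family_defect)
  ultimately show ?thesis
    using \<alpha>0 by blast
qed

end
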